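(* Let $w_1,\dots,w_N\in\mathbb{R}^d$, let $\mathcal{V}$ be a linear subspace of $\mathbb{S}^d$, and let $\mathcal{C}^*=\{\sum_{i=1}^N\lambda_iw_iw_i^T:\lambda_i\ge0\}$. Consider the linear program in the variables $X\in\mathbb{S}^d$, $\lambda,t\in\mathbb{R}^N$: $$\text{maximize }\sum_{i=1}^Nt_i\ \text{ subject to } X\in\mathcal{V},\ X=\sum_{i=1}^N\lambda_iw_iw_i^T,\ \lambda_i\ge t_i,\ 1\ge t_i\ge0\ (i=1,\dots,N).$$ For any optimal solution $(X,\lambda,t)$, $X\in\mathcal{V}\cap\mathcal{C}^*$ and $\operatorname{rank}X\ge\operatorname{rank}Y$ for all $Y\in\mathcal{V}\cap\mathcal{C}^*$.
   Context: $\mathbb{S}^d$ denotes the space of real symmetric $d\times d$ matrices. *)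

theory Defs
  imports "HOL-Analysis.Analysis"
begin

definition outer :: "real^'d \<Rightarrow> real^'d^'d" where
  "outer w = (\<chi> i j. w $ i * w $ j)"

definition dual_cone :: "(nat \<Rightarrow> real^'d) \<Rightarrow> nat \<Rightarrow> (real^'d^'d) set" where
  "dual_cone w N = {(\<Sum>i<N. l i *\<^sub>R outer (w i)) | l. \<forall>i<N. l i \<ge> 0}"

definition lp_feasible ::
  "(real^'d^'d) set \<Rightarrow> (nat \<Rightarrow> real^'d) \<Rightarrow> nat \<Rightarrow> real^'d^'d \<Rightarrow> (nat \<Rightarrow> real) \<Rightarrow> (nat \<Rightarrow> real) \<Rightarrow> bool" where
  "lp_feasible V w N X l t \<longleftrightarrow>
     X \<in> V \<and> X = (\<Sum>i<N. l i *\<^sub>R outer (w i)) \<and>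
     (\<forall>i<N. l i \<ge> t i \<and> 1 \<ge> t i \<and> t i \<ge> 0)"

definition lp_optimal ::
  "(real^'d^'d) set \<Rightarrow> (nat \<Rightarrow> real^'d) \<Rightarrow> nat \<Rightarrow> real^'d^'d \<Rightarrow> (nat \<Rightarrow> real) \<Rightarrow> (nat \<Rightarrow> real) \<Rightarrow> bool" where
  "lp_optimal V w N X l t \<longleftrightarrow>
     lp_feasible V w N X l t \<and>
     (\<forall>X' l' t'. lp_feasible V w N X' l' t' \<longrightarrow> (\<Sum>i<N. t' i) \<le> (\<Sum>i<N. t i))"

end

theory Submission
  imports Defs
begin

text \<open>An optimal solution uses every generator that any matrix of \<open>\<V> \<inter> \<C>\<^sup>*\<close> uses: if
  \<open>Y = \<Sum> m\<^sub>i w\<^sub>i w\<^sub>i\<^sup>T \<in> \<V>\<close> has \<open>m\<^sub>j > 0\<close>, adding \<open>Y / m\<^sub>j\<close> to \<open>X\<close> allows \<open>t\<^sub>j = 1\<close> without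
  touching the other \<open>t\<^sub>i\<close>, so optimality forces \<open>\<lambda>\<^sub>j \<ge> t\<^sub>j \<ge> 1\<close>. The range of a matrix
  \<open>\<Sum> \<lambda>\<^sub>i w\<^sub>i w\<^sub>i\<^sup>T\<close> with \<open>\<lambda> \<ge> 0\<close> is the span of the \<open>w\<^sub>i\<close> with \<open>\<lambda>\<^sub>i > 0\<close>, so the range of
  every such \<open>Y\<close> lies in that of \<open>X\<close>.\<close>

lemma outer_mult_vec: "outer w *v v = (w \<bullet> v) *\<^sub>R w"
  by (simp add: vec_eq_iff outer_def matrix_vector_mult_def inner_vec_def
      sum_distrib_left mult_ac)

lemma sum_outer_mult_vec:
  fixes N :: nat
  shows "(\<Sum>i<N. l i *\<^sub>R outer (w i)) *v v = (\<Sum>i<N. (l i * (w i \<bullet> v)) *\<^sub>R w i)"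
  by (induction N)
    (simp_all add: matrix_vector_mult_add_rdistrib outer_mult_vec
      scaleR_matrix_vector_assoc[symmetric])

lemma sum_outer_quadratic_form:
  fixes N :: nat
  shows "v \<bullet> ((\<Sum>i<N. l i *\<^sub>R outer (w i)) *v v) = (\<Sum>i<N. l i * (w i \<bullet> v)\<^sup>2)"
  unfolding sum_outer_mult_vec inner_sum_right inner_scaleR_right
  by (intro sum.cong refl) (simp add: power2_eq_square inner_commute)

lemma range_sum_outer_subset_span:
  fixes w :: "nat \<Rightarrow> real^'d"
  shows "range ((*v) (\<Sum>i<N. l i *\<^sub>R outer (w i))) \<subseteq> span {w i | i. i < N \<and> l i \<noteq> 0}"
proof
  fix y assume "y \<in> range ((*v) (\<Sum>i<N. l i *\<^sub>R outer (w i)))"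
  then obtain v where y: "y = (\<Sum>i<N. (l i * (w i \<bullet> v)) *\<^sub>R w i)"
    by (auto simp: sum_outer_mult_vec)
  also have "\<dots> = (\<Sum>i\<in>{i. i < N \<and> l i \<noteq> 0}. (l i * (w i \<bullet> v)) *\<^sub>R w i)"
    by (rule sum.mono_neutral_right) auto
  also have "\<dots> \<in> span {w i | i. i < N \<and> l i \<noteq> 0}"
    by (intro span_sum span_scale span_base) auto
  finally show "y \<in> span {w i | i. i < N \<and> l i \<noteq> 0}" .
qed

lemma generator_in_range_sum_outer:
  fixes w :: "nat \<Rightarrow> real^'d"
  assumes nonneg: "\<forall>i<N. l i \<ge> 0" and j: "j < N" "l j \<noteq> 0"
  shows "w j \<in> range ((*v) (\<Sum>i<N. l i *\<^sub>R outer (w i)))"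
proof -
  let ?X = "\<Sum>i<N. l i *\<^sub>R outer (w i)"
  let ?R = "range ((*v) ?X)"
  have span_R: "span ?R = ?R"
    by (simp add: linear_subspace_image matrix_vector_mul_linear)
  obtain p q where p: "p \<in> ?R" and q_orth: "\<And>z. z \<in> ?R \<Longrightarrow> q \<bullet> z = 0"
    and wj: "w j = p + q"
    using orthogonal_subspace_decomp_exists[of ?R "w j"] span_R
    by (auto simp: orthogonal_def)
  \<comment> \<open>\<open>q \<perp> X q\<close> makes the quadratic form vanish at \<open>q\<close>, so \<open>q \<perp> w\<^sub>j\<close>, and \<open>q \<perp> p\<close>.\<close>
  have "(\<Sum>i<N. l i * (w i \<bullet> q)\<^sup>2) = 0"
    using q_orth[of "?X *v q"] by (simp add: sum_outer_quadratic_form)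
  then have "w j \<bullet> q = 0"
    using sum_nonneg_eq_0_iff[of "{..<N}" "\<lambda>i. l i * (w i \<bullet> q)\<^sup>2"] nonneg j by auto
  moreover have "q \<bullet> p = 0" using p by (rule q_orth)
  ultimately have "q \<bullet> q = 0" using wj by (simp add: inner_add_right inner_commute)
  then show ?thesis using wj p by simp
qed

lemma range_sum_outer:
  fixes w :: "nat \<Rightarrow> real^'d"
  assumes "\<forall>i<N. l i \<ge> 0"
  shows "range ((*v) (\<Sum>i<N. l i *\<^sub>R outer (w i))) = span {w i | i. i < N \<and> l i \<noteq> 0}"
proof
  show "span {w i | i. i < N \<and> l i \<noteq> 0} \<subseteq> range ((*v) (\<Sum>i<N. l i *\<^sub>R outer (w i)))"
    using generator_in_range_sum_outer[OF assms]
    by (intro span_minimal) (auto simp: linear_subspace_image matrix_vector_mul_linear)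
qed (rule range_sum_outer_subset_span)

lemma lp_optimal_weight_ge_1:
  assumes "subspace V" and opt: "lp_optimal V w N X l t"
    and Y: "Y = (\<Sum>i<N. m i *\<^sub>R outer (w i))" "Y \<in> V" and m_nonneg: "\<forall>i<N. m i \<ge> 0"
    and j: "j < N" "m j \<noteq> 0"
  shows "l j \<ge> 1"
proof -
  have X: "X \<in> V" "X = (\<Sum>i<N. l i *\<^sub>R outer (w i))"
    and t: "\<forall>i<N. t i \<le> l i \<and> t i \<le> 1 \<and> 0 \<le> t i"
    using opt by (auto simp: lp_optimal_def lp_feasible_def)
  define c where "c = 1 / m j"
  have c: "c > 0" "c * m j = 1" using m_nonneg j by (auto simp: c_def)
  have "lp_feasible V w N (X + c *\<^sub>R Y) (\<lambda>i. l i + c * m i) (t(j := 1))"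
    unfolding lp_feasible_def
  proof (intro conjI allI impI)
    show "X + c *\<^sub>R Y \<in> V"
      using \<open>subspace V\<close> X Y by (simp add: subspace_add subspace_scale)
    show "X + c *\<^sub>R Y = (\<Sum>i<N. (l i + c * m i) *\<^sub>R outer (w i))"
      unfolding X Y by (simp add: sum.distrib scaleR_sum_right scaleR_add_left)
    fix i assume "i < N"
    moreover have "c * m i \<ge> 0" using c m_nonneg \<open>i < N\<close> by simp
    ultimately show "(t(j := 1)) i \<le> l i + c * m i" "(t(j := 1)) i \<le> 1" "0 \<le> (t(j := 1)) i"
      using t c by auto
  qed
  then have "(\<Sum>i<N. (t(j := 1)) i) \<le> (\<Sum>i<N. t i)"
    using opt unfolding lp_optimal_def by blast
  then have "t j \<ge> 1"
    using j by (simp add: sum.remove[of "{..<N}" j])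
  then show ?thesis using t j by force
qed

theorem corollary3:
  fixes w :: "nat \<Rightarrow> real^'d" and N :: nat and V :: "(real^'d^'d) set"
    and X :: "real^'d^'d" and l t :: "nat \<Rightarrow> real"
  assumes "subspace V"
    and "\<forall>A\<in>V. transpose A = A"
    and "lp_optimal V w N X l t"
  shows "X \<in> V \<inter> dual_cone w N \<and> (\<forall>Y\<in>V \<inter> dual_cone w N. rank Y \<le> rank X)"
proof -
  have X: "X \<in> V" "X = (\<Sum>i<N. l i *\<^sub>R outer (w i))" and l_nonneg: "\<forall>i<N. l i \<ge> 0"
    using assms(3) unfolding lp_optimal_def lp_feasible_def by force+
  have "rank Y \<le> rank X" if "Y \<in> V" "Y \<in> dual_cone w N" for Y
  proof -
    obtain m where Y: "Y = (\<Sum>i<N. m i *\<^sub>R outer (w i))" and m_nonneg: "\<forall>i<N. m i \<ge> 0"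
      using \<open>Y \<in> dual_cone w N\<close> unfolding dual_cone_def by blast
    have "{w i | i. i < N \<and> m i \<noteq> 0} \<subseteq> {w i | i. i < N \<and> l i \<noteq> 0}"
      using lp_optimal_weight_ge_1[OF assms(1,3) Y \<open>Y \<in> V\<close> m_nonneg] by force
    then have "range ((*v) Y) \<subseteq> range ((*v) X)"
      unfolding X(2) Y range_sum_outer[OF m_nonneg] range_sum_outer[OF l_nonneg]
      by (rule span_mono)
    then show ?thesis by (simp add: rank_dim_range dim_subset)
  qed
  moreover have "X \<in> dual_cone w N" using X l_nonneg unfolding dual_cone_def by blast
  ultimately show ?thesis using X by blast
qed

end
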